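(* Let $\mathbb{k}$ be any field and $\mathfrak{h}$ a left Leibniz algebra over $\mathbb{k}$ of finite dimension $n$ with ordered basis $\mathbf{b}=(x_1,\ldots,x_n)$ and structure constants $C^i_{jk}$ given by $[x_j,x_k]=\sum_iC^i_{jk}x_i$. Let $\mathcal{G}^i_j,\bar{\mathcal{G}}^i_j$ be the generators of $\mathcal{O}(\mathrm{Aut}(\mathfrak{h}))$ relative to $\mathbf{b}$, and let $\tilde x$ denote the image of $x\in\mathfrak{h}$ in $\mathfrak{h}_{Lie}$. Then there exists a unique Hopf pairing $\langle-,-\rangle\colon U(\mathfrak{h}_{Lie})\otimes\mathcal{O}(\mathrm{Aut}(\mathfrak{h}))\to\mathbb{k}$ such that $\langle\tilde x_k,\mathcal{G}^i_j\rangle=C^i_{kj}$ for all $i,j,k\in\{1,\ldots,n\}$. This Hopf pairing does not depend on the choice of basis $\mathbf{b}$.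
   Context: A left Leibniz algebra is a vector space $\mathfrak{h}$ with a bilinear bracket satisfying $[x,[y,z]]=[[x,y],z]+[y,[x,z]]$. $\mathfrak{h}_{Lie}$ is the quotient of $\mathfrak{h}$ by the two-sided ideal generated by all $[x,x]$; $U(\mathfrak{h}_{Lie})$ is its universal enveloping algebra with its standard Hopf algebra structure. $\mathcal{O}(\mathrm{Aut}(\mathfrak{h}))$ is the coordinate Hopf algebra of the affine algebraic group of automorphisms of $\mathfrak{h}$; relative to $\mathbf{b}$ it is the commutative algebra generated by $\mathcal{G}^i_j,\bar{\mathcal{G}}^i_j$ ($\mathcal{G}^i_j$ gives the $(i,j)$ matrix entry of an automorphism $\psi$ in basis $\mathbf{b}$, $\psi(x_j)=\sum_i\mathcal{G}^i_j(\psi)x_i$; $\bar{\mathcal{G}}^i_j$ that of $\psi^{-1}$) with relations $\sum_{l,m}C^k_{lm}\mathcal{G}^l_i\mathcal{G}^m_j=\sum_r\mathcal{G}^k_rC^r_{ij}$, $\sum_k\mathcal{G}^i_k\bar{\mathcal{G}}^k_j=\delta^i_j=\sum_k\bar{\mathcal{G}}^i_k\mathcal{G}^k_j$, and Hopf structure $\Delta(\mathcal{G}^i_j)=\sum_k\mathcal{G}^i_k\otimes\mathcal{G}^k_j$, $\Delta(\bar{\mathcal{G}}^i_j)=\sum_k\bar{\mathcal{G}}^k_j\otimes\bar{\mathcal{G}}^i_k$, $\epsilon(\mathcal{G}^i_j)=\epsilon(\bar{\mathcal{G}}^i_j)=\delta^i_j$, $S(\mathcal{G}^i_j)=\bar{\mathcal{G}}^i_j$,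 $S(\bar{\mathcal{G}}^i_j)=\mathcal{G}^i_j$. A Hopf pairing $B\otimes H\to\mathbb{k}$ of bialgebras is a bilinear form (not required nondegenerate) with $\langle\Delta_B(b),h\otimes k\rangle=\langle b,hk\rangle$, $\langle b,1\rangle=\epsilon_B(b)$, $\langle b\otimes c,\Delta_H(h)\rangle=\langle bc,h\rangle$, $\langle 1,h\rangle=\epsilon_H(h)$, with componentwise pairing of tensor products. *)

theory Defs
  imports "HOL-Library.Multiset"
begin

text \<open>Concrete model. The Leibniz algebra h has a basis indexed by the finite type 'n
 (n = CARD('n)); C i j k is the structure constant C^i_{jk}, i.e.
 [x_j, x_k] = sum_i C i j k x_i.

 U(h_Lie) is presented as the tensor algebra T(h) (basis: words 'n list) modulo the
 two-sided ideal generated by x_a x_b - x_b x_a - [x_a, x_b]; the image of x_k is the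
 word [k].  O(Aut h) is the polynomial algebra in the variables G i j, Gb i j (basis:
 monomials = multisets of variables) modulo the defining relations.  A bilinear form
 U(h_Lie) x O(Aut h) -> k is thus the same as a function on words x monomials which
 vanishes on spanning sets of both ideals.\<close>

datatype 'n gvar = G 'n 'n | Gb 'n 'n

type_synonym ('n, 'k) pairing = "'n list \<Rightarrow> 'n gvar multiset \<Rightarrow> 'k"

definition leibniz_consts :: "('n::finite \<Rightarrow> 'n \<Rightarrow> 'n \<Rightarrow> 'k::field) \<Rightarrow> bool" where
  "leibniz_consts C \<longleftrightarrow> (\<forall>a b c i.
     (\<Sum>m\<in>UNIV. C m b c * C i a m) =
     (\<Sum>m\<in>UNIV. C m a b * C i m c) + (\<Sum>m\<in>UNIV. C m a c * C i b m))"

definition vanishes_U :: "('n::finite \<Rightarrow> 'n \<Rightarrow> 'n \<Rightarrow> 'k::field) \<Rightarrow> ('n, 'k) pairing \<Rightarrow> bool" where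
  "vanishes_U C p \<longleftrightarrow> (\<forall>u v a b f.
     p (u @ [a, b] @ v) f - p (u @ [b, a] @ v) f - (\<Sum>m\<in>UNIV. C m a b * p (u @ [m] @ v) f) = 0)"

definition vanishes_O :: "('n::finite \<Rightarrow> 'n \<Rightarrow> 'n \<Rightarrow> 'k::field) \<Rightarrow> ('n, 'k) pairing \<Rightarrow> bool" where
  "vanishes_O C p \<longleftrightarrow> (\<forall>w f.
     (\<forall>k i j. (\<Sum>l\<in>UNIV. \<Sum>m\<in>UNIV. C k l m * p w (f + {#G l i, G m j#}))
              - (\<Sum>r\<in>UNIV. C r i j * p w (f + {#G k r#})) = 0) \<and>
     (\<forall>i j. (\<Sum>k\<in>UNIV. p w (f + {#G i k, Gb k j#})) - (if i = j then p w f else 0) = 0) \<and>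
     (\<forall>i j. (\<Sum>k\<in>UNIV. p w (f + {#Gb i k, G k j#})) - (if i = j then p w f else 0) = 0))"

text \<open>Coproduct of U: Delta(x) = x (x) 1 + 1 (x) x, so a word splits as a sum over subsets.\<close>
definition delta_U_cond :: "('n, 'k::field) pairing \<Rightarrow> bool" where
  "delta_U_cond p \<longleftrightarrow> (\<forall>w f g. p w (f + g) =
     (\<Sum>S\<in>Pow {..<length w}. p (nths w S) f * p (nths w ({..<length w} - S)) g))"

definition eps_U_cond :: "('n, 'k::field) pairing \<Rightarrow> bool" where
  "eps_U_cond p \<longleftrightarrow> (\<forall>w. p w {#} = (if w = [] then 1 else 0))"

text \<open>Coproduct of O: Delta(G i j) = sum_k G i k (x) G k j,
  Delta(Gb i j) = sum_k Gb k j (x) Gb i k.\<close>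
fun left_part :: "'n gvar \<Rightarrow> 'n \<Rightarrow> 'n gvar" where
  "left_part (G i j) k = G i k"
| "left_part (Gb i j) k = Gb k j"

fun right_part :: "'n gvar \<Rightarrow> 'n \<Rightarrow> 'n gvar" where
  "right_part (G i j) k = G k j"
| "right_part (Gb i j) k = Gb i k"

definition delta_O_cond :: "('n::finite, 'k::field) pairing \<Rightarrow> bool" where
  "delta_O_cond p \<longleftrightarrow> (\<forall>u v fl. p (u @ v) (mset fl) =
     (\<Sum>ks\<in>{ks. length ks = length fl}.
        p u (mset (map2 left_part fl ks)) * p v (mset (map2 right_part fl ks))))"

fun gdiag :: "'n gvar \<Rightarrow> bool" where
  "gdiag (G i j) = (i = j)"
| "gdiag (Gb i j) = (i = j)"

definition eps_O_cond :: "('n, 'k::field) pairing \<Rightarrow> bool" where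
  "eps_O_cond p \<longleftrightarrow> (\<forall>f. p [] f = (if (\<forall>x\<in>#f. gdiag x) then 1 else 0))"

definition hopf_pairing :: "('n::finite \<Rightarrow> 'n \<Rightarrow> 'n \<Rightarrow> 'k::field) \<Rightarrow> ('n, 'k) pairing \<Rightarrow> bool" where
  "hopf_pairing C p \<longleftrightarrow> vanishes_U C p \<and> vanishes_O C p \<and>
     delta_U_cond p \<and> eps_U_cond p \<and> delta_O_cond p \<and> eps_O_cond p"

definition pairs_generators :: "('n \<Rightarrow> 'n \<Rightarrow> 'n \<Rightarrow> 'k) \<Rightarrow> ('n, 'k) pairing \<Rightarrow> bool" where
  "pairs_generators C p \<longleftrightarrow> (\<forall>i j k. p [k] {#G i j#} = C i k j)"

text \<open>Change of basis: x'_j = sum_i P i j x_i, with Q = P^{-1}.\<close>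
definition inverse_matrices :: "('n::finite \<Rightarrow> 'n \<Rightarrow> 'k::field) \<Rightarrow> ('n \<Rightarrow> 'n \<Rightarrow> 'k) \<Rightarrow> bool" where
  "inverse_matrices P Q \<longleftrightarrow>
     (\<forall>i j. (\<Sum>k\<in>UNIV. P i k * Q k j) = (if i = j then 1 else 0)) \<and>
     (\<forall>i j. (\<Sum>k\<in>UNIV. Q i k * P k j) = (if i = j then 1 else 0))"

definition change_consts :: "('n::finite \<Rightarrow> 'n \<Rightarrow> 'k::field) \<Rightarrow> ('n \<Rightarrow> 'n \<Rightarrow> 'k) \<Rightarrow>
    ('n \<Rightarrow> 'n \<Rightarrow> 'n \<Rightarrow> 'k) \<Rightarrow> ('n \<Rightarrow> 'n \<Rightarrow> 'n \<Rightarrow> 'k)" where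
  "change_consts P Q C i j k = (\<Sum>a\<in>UNIV. \<Sum>b\<in>UNIV. \<Sum>m\<in>UNIV. Q i m * C m a b * P a j * P b k)"

text \<open>Canonical identification of the presentations: G'^i_j = sum_{a,c} Q i a G^a_c P c j,
  Gb'^i_j = sum_{a,c} Q i a Gb^a_c P c j, and x'_k~ = sum_a P a k x_a~.\<close>
fun subst_var :: "'n gvar \<Rightarrow> 'n \<times> 'n \<Rightarrow> 'n gvar" where
  "subst_var (G i j) (a, c) = G a c"
| "subst_var (Gb i j) (a, c) = Gb a c"

fun subst_coef :: "('n \<Rightarrow> 'n \<Rightarrow> 'k::field) \<Rightarrow> ('n \<Rightarrow> 'n \<Rightarrow> 'k) \<Rightarrow> 'n gvar \<Rightarrow> 'n \<times> 'n \<Rightarrow> 'k" where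
  "subst_coef P Q (G i j) (a, c) = Q i a * P c j"
| "subst_coef P Q (Gb i j) (a, c) = Q i a * P c j"

text \<open>transported P Q p w fl = value of p on the images (in the b-presentations) of the
  word w in the x'~ and of the monomial fl in the G', Gb'.\<close>
definition transported :: "('n::finite \<Rightarrow> 'n \<Rightarrow> 'k::field) \<Rightarrow> ('n \<Rightarrow> 'n \<Rightarrow> 'k) \<Rightarrow> ('n, 'k) pairing \<Rightarrow>
    'n list \<Rightarrow> 'n gvar list \<Rightarrow> 'k" where
  "transported P Q p w fl =
     (\<Sum>as\<in>{as. length as = length w}. (\<Prod>t<length w. P (as ! t) (w ! t)) *
        (\<Sum>acs\<in>{acs. length acs = length fl}. (\<Prod>t<length fl. subst_coef P Q (fl ! t) (acs ! t)) *
           p as (mset (map2 subst_var fl acs))))"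

end

theory Submission
  imports Defs "HOL-Combinatorics.Permutations"
begin

text \<open>
  Pairing with a generator x~_a is an epsilon-derivation of O(Aut h). Together with
  <u v, f> = <u (x) v, Delta f> and <1, f> = epsilon(f) this determines a Hopf pairing recursively
  from its values on generators: <x~_a, G^i_j> = C^i_aj is prescribed, and
  <x~_a, Gb^i_j> = -C^i_aj is forced by the relation G Gb = 1. Hence uniqueness.
  Taking the same recursion as a definition on words and lists of variables gives existence:
  the result is symmetric in the variables, compatible with both coproducts, and kills the
  defining relations -- the commutator relations of U(h_Lie) because the left Leibniz identity
  says ad [x_a, x_b] = [ad x_a, ad x_b], the bracket relations of O(Aut h) because the same
  identity says that ad x_a is a derivation, and G Gb = Gb G = 1 because G and Gb pair with
  opposite values. Finally, the form transported from the basis b satisfies the recursion for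
  the new structure constants, so by uniqueness it is the pairing relative to the new basis.
\<close>

section \<open>Finite sums and lists\<close>

lemma finite_lists_length [simp]: "finite {xs :: 'a::finite list. length xs = n}"
  using finite_lists_length_eq[of "UNIV :: 'a set" n] by simp

lemma sum_lessThan_add: "(\<Sum>s<m + n. f s) = (\<Sum>s<m. f s) + (\<Sum>t<n. f (m + t :: nat))"
  by (induction n) (simp_all add: add.assoc)

lemma sum_lists_length_Suc:
  "(\<Sum>xs\<in>{xs :: 'a::finite list. length xs = Suc n}. F xs) = (\<Sum>x\<in>UNIV. \<Sum>xs\<in>{xs. length xs = n}. F (x # xs))"
proof -
  have "{xs :: 'a list. length xs = Suc n} = (\<lambda>(x, xs). x # xs) ` (UNIV \<times> {xs. length xs = n})"
    by (auto simp: length_Suc_conv)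
  moreover have "inj_on (\<lambda>(x, xs). x # xs) (UNIV \<times> {xs :: 'a list. length xs = n})"
    by (auto simp: inj_on_def)
  ultimately show ?thesis
    by (simp add: sum.reindex sum.cartesian_product split_def)
qed

lemma sum_UNIV_prod: "(\<Sum>y\<in>UNIV. f y) = (\<Sum>a\<in>UNIV. \<Sum>b\<in>UNIV. f (a, b))"
  by (simp add: UNIV_Times_UNIV[symmetric] sum.cartesian_product del: UNIV_Times_UNIV)

lemma sum_swap_innermost3:
  "(\<Sum>k\<in>A. \<Sum>b\<in>B. \<Sum>d\<in>D. f k b d) = (\<Sum>b\<in>B. \<Sum>d\<in>D. \<Sum>k\<in>A. f k b d)"
  by (subst sum.swap) (rule sum.cong[OF refl], rule sum.swap)

lemma sum_swap_innermost4:
  "(\<Sum>k\<in>A. \<Sum>b\<in>B. \<Sum>d\<in>D. \<Sum>m\<in>E. f k b d m) = (\<Sum>b\<in>B. \<Sum>d\<in>D. \<Sum>m\<in>E. \<Sum>k\<in>A. f k b d m)"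
  by (subst sum_swap_innermost3) (rule sum.cong[OF refl], rule sum.cong[OF refl], rule sum.swap)

lemma sum_Pow_lessThan_Suc:
  "(\<Sum>S\<in>Pow {..<Suc n}. F S)
     = (\<Sum>S\<in>Pow {..<n}. F (Suc ` S)) + (\<Sum>S\<in>Pow {..<n}. F (insert 0 (Suc ` S)))"
proof -
  have Pow_split: "Pow {..<Suc n} = image Suc ` Pow {..<n} \<union> (\<lambda>S. insert 0 (Suc ` S)) ` Pow {..<n}"
    unfolding lessThan_Suc_eq_insert_0 Pow_insert
    by (auto simp: image_image subset_image_iff image_Pow_surj[symmetric])
  have "inj_on (image Suc) (Pow {..<n})"
    by (simp add: inj_on_def inj_image_eq_iff)
  moreover have "inj_on (\<lambda>S. insert 0 (Suc ` S)) (Pow {..<n})"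
    by (rule inj_onI) (auto simp: inj_image_eq_iff dest: arg_cong[where f = "\<lambda>A. A - {0}"])
  ultimately show ?thesis
    unfolding Pow_split by (subst sum.union_disjoint) (auto simp: sum.reindex)
qed

lemma nths_Cons_Suc_image [simp]: "nths (a # v) (Suc ` S) = nths v S"
  by (simp add: nths_Cons image_iff)

lemma nths_Cons_insert_0_Suc_image [simp]: "nths (a # v) (insert 0 (Suc ` S)) = a # nths v S"
  by (simp add: nths_Cons image_iff)

lemma lessThan_Suc_diff_Suc_image:
  "S \<subseteq> {..<n} \<Longrightarrow> {..<Suc n} - Suc ` S = insert 0 (Suc ` ({..<n} - S))"
  unfolding lessThan_Suc_eq_insert_0 by auto

lemma lessThan_Suc_diff_insert_0_Suc_image:
  "S \<subseteq> {..<n} \<Longrightarrow> {..<Suc n} - insert 0 (Suc ` S) = Suc ` ({..<n} - S)"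
  unfolding lessThan_Suc_eq_insert_0 by auto

lemma permute_list_update:
  assumes "\<pi> permutes {..<length xs}" and "s < length xs"
  shows "(permute_list \<pi> xs)[s := y] = permute_list \<pi> (xs[\<pi> s := y])"
proof (rule nth_equalityI)
  fix i assume "i < length ((permute_list \<pi> xs)[s := y])"
  moreover have "\<pi> i = \<pi> s \<longleftrightarrow> i = s"
    using permutes_inj[OF assms(1)] by (auto dest: injD)
  moreover have "\<pi> s < length xs"
    using permutes_in_image[OF assms(1), of s] assms(2) by simp
  ultimately show "(permute_list \<pi> xs)[s := y] ! i = permute_list \<pi> (xs[\<pi> s := y]) ! i"
    using assms by (auto simp: permute_list_nth permutes_in_image nth_list_update)
qed simp

lemma map2_update_left: "map2 f (xs[s := y]) ys = (map2 f xs ys)[s := f y (ys ! s)]"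
  by (subst list_update_id[of ys s, symmetric]) (simp only: zip_update map_update, simp)

section \<open>An explicit pairing on words and lists of variables\<close>

fun var_pairing :: "('n \<Rightarrow> 'n \<Rightarrow> 'n \<Rightarrow> 'k::field) \<Rightarrow> 'n \<Rightarrow> 'n gvar \<Rightarrow> 'k" where
  "var_pairing C a (G i j) = C i a j"
| "var_pairing C a (Gb i j) = - C i a j"

definition eps_list :: "'n gvar list \<Rightarrow> 'k::field" where
  "eps_list fl = (if \<forall>x\<in>set fl. gdiag x then 1 else 0)"

definition deriv_at :: "('n::finite \<Rightarrow> 'n \<Rightarrow> 'n \<Rightarrow> 'k::field) \<Rightarrow> 'n \<Rightarrow> nat \<Rightarrow>
    ('n gvar list \<Rightarrow> 'k) \<Rightarrow> 'n gvar list \<Rightarrow> 'k" where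
  "deriv_at C a s \<Phi> fl =
     (\<Sum>k\<in>UNIV. var_pairing C a (left_part (fl ! s) k) * \<Phi> (fl[s := right_part (fl ! s) k]))"

text \<open>
  deriv_list C a \<Phi> fl is \<Phi> applied to (<x~_a, -> (x) id)(Delta fl). Since <x~_a, -> is an
  epsilon-derivation, only the terms of Delta fl in which one left tensor factor is paired with
  x~_a and all others with epsilon survive.
\<close>
definition deriv_list :: "('n::finite \<Rightarrow> 'n \<Rightarrow> 'n \<Rightarrow> 'k::field) \<Rightarrow> 'n \<Rightarrow>
    ('n gvar list \<Rightarrow> 'k) \<Rightarrow> 'n gvar list \<Rightarrow> 'k" where
  "deriv_list C a \<Phi> fl = (\<Sum>s<length fl. deriv_at C a s \<Phi> fl)"

primrec list_pairing :: "('n::finite \<Rightarrow> 'n \<Rightarrow> 'n \<Rightarrow> 'k::field) \<Rightarrow> 'n list \<Rightarrow> 'n gvar list \<Rightarrow> 'k" where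
  "list_pairing C [] = eps_list"
| "list_pairing C (a # v) = deriv_list C a (list_pairing C v)"

declare list_pairing.simps(2) [simp del]

lemma eps_list_Nil [simp]: "eps_list [] = 1"
  by (simp add: eps_list_def)

lemma eps_list_Cons: "eps_list (x # fl) = (if gdiag x then eps_list fl else 0)"
  by (simp add: eps_list_def)

lemma eps_list_append: "eps_list (fl @ gl) = eps_list fl * eps_list gl"
  by (auto simp: eps_list_def)

lemma left_part_left_part [simp]: "left_part (left_part x c) k = left_part x k"
  by (cases x) auto

lemma right_part_right_part [simp]: "right_part (right_part x c) k = right_part x k"
  by (cases x) auto

lemma left_part_right_part [simp]: "left_part (right_part x k) c = right_part (left_part x c) k"
  by (cases x) auto

lemma list_pairing_no_vars [simp]: "list_pairing C w [] = (if w = [] then 1 else 0)"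
  by (cases w) (simp_all add: list_pairing.simps deriv_list_def)

lemma deriv_list_append:
  "deriv_list C a \<Phi> (fl @ gl)
     = deriv_list C a (\<lambda>fl'. \<Phi> (fl' @ gl)) fl + deriv_list C a (\<lambda>gl'. \<Phi> (fl @ gl')) gl"
  unfolding deriv_list_def deriv_at_def length_append sum_lessThan_add
  by (simp add: nth_append list_update_append)

lemma deriv_list_linear:
  "deriv_list C a (\<lambda>fl. \<Sum>i\<in>I. c i * \<Phi> i fl) gl = (\<Sum>i\<in>I. c i * deriv_list C a (\<Phi> i) gl)"
  "deriv_list C a (\<lambda>fl. \<Sum>i\<in>I. \<Phi> i fl * c i) gl = (\<Sum>i\<in>I. deriv_list C a (\<Phi> i) gl * c i)"
  unfolding deriv_list_def deriv_at_def sum_distrib_left sum_distrib_right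
  by (simp_all add: mult_ac sum.swap[of _ I])

lemma deriv_list_Cons:
  "deriv_list C a \<Phi> (x # fl) = (\<Sum>k\<in>UNIV. var_pairing C a (left_part x k) * \<Phi> (right_part x k # fl))
     + deriv_list C a (\<lambda>gl. \<Phi> (x # gl)) fl"
  using deriv_list_append[of C a \<Phi> "[x]" fl] by (simp add: deriv_list_def deriv_at_def)

lemma list_pairing_permute_list:
  "\<pi> permutes {..<length fl} \<Longrightarrow> list_pairing C w (permute_list \<pi> fl) = list_pairing C w fl"
proof (induction w arbitrary: fl \<pi>)
  case Nil
  then show ?case by (simp add: eps_list_def set_permute_list)
next
  case (Cons a v)
  have "deriv_at C a s (list_pairing C v) (permute_list \<pi> fl) = deriv_at C a (\<pi> s) (list_pairing C v) fl"
    if "s < length fl" for s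
    using that Cons by (simp add: deriv_at_def permute_list_nth permute_list_update permutes_in_image)
  then show ?case
    using sum.permute[OF Cons.prems, of "\<lambda>s. deriv_at C a s (list_pairing C v) fl"]
    by (simp add: list_pairing.simps deriv_list_def)
qed

lemma list_pairing_mset_eq: "mset fl = mset gl \<Longrightarrow> list_pairing C w fl = list_pairing C w gl"
  by (metis mset_eq_permutation list_pairing_permute_list)

fun diag_index :: "'n gvar \<Rightarrow> 'n" where
  "diag_index (G i j) = i"
| "diag_index (Gb i j) = j"

lemma eps_list_map2_left_part:
  "length ks = length fl \<Longrightarrow> eps_list (map2 left_part fl ks) = (if ks = map diag_index fl then 1 else 0)"
proof (induction fl arbitrary: ks)
  case (Cons x fl)
  then obtain k ks' where "ks = k # ks'" "length ks' = length fl"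
    by (cases ks) auto
  with Cons.IH show ?case
    by (cases x) (auto simp: eps_list_Cons)
qed simp

lemma map2_right_part_diag_index [simp]: "map2 right_part fl (map diag_index fl) = fl"
proof (induction fl)
  case (Cons x fl)
  then show ?case by (cases x) auto
qed simp

lemma deriv_at_coproduct:
  fixes \<Psi> \<Theta> :: "'n::finite gvar list \<Rightarrow> 'k::field"
  assumes s: "s < length fl"
  shows "deriv_at C a s (\<lambda>gl. \<Sum>ks\<in>{ks. length ks = length gl}.
             \<Psi> (map2 left_part gl ks) * \<Theta> (map2 right_part gl ks)) fl
       = (\<Sum>ks\<in>{ks. length ks = length fl}.
             deriv_at C a s \<Psi> (map2 left_part fl ks) * \<Theta> (map2 right_part fl ks))"
proof -
  let ?L = "{ks. length ks = length fl}"
  have summand: "var_pairing C a (left_part (fl ! s) k) *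
          (\<Psi> (map2 left_part (fl[s := right_part (fl ! s) k]) ks) *
           \<Theta> (map2 right_part (fl[s := right_part (fl ! s) k]) ks))
      = var_pairing C a (left_part (map2 left_part fl ks ! s) k) *
          \<Psi> ((map2 left_part fl ks)[s := right_part (map2 left_part fl ks ! s) k]) *
          \<Theta> (map2 right_part fl ks)"
    if "ks \<in> ?L" for k ks
    using that s list_update_id[of "map2 right_part fl ks" s] by (simp add: map2_update_left)
  then show ?thesis
    unfolding deriv_at_def sum_distrib_left sum_distrib_right
    by (subst sum.swap) (intro sum.cong refl, simp add: summand)
qed

lemma list_pairing_word_append:
  "list_pairing C (u @ v) fl = (\<Sum>ks\<in>{ks. length ks = length fl}.
      list_pairing C u (map2 left_part fl ks) * list_pairing C v (map2 right_part fl ks))"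
proof (induction u arbitrary: fl)
  case Nil
  have "(\<Sum>ks\<in>{ks. length ks = length fl}. eps_list (map2 left_part fl ks) * list_pairing C v (map2 right_part fl ks))
      = (\<Sum>ks\<in>{ks. length ks = length fl}. if ks = map diag_index fl then list_pairing C v (map2 right_part fl ks) else 0)"
    by (intro sum.cong) (simp_all add: eps_list_map2_left_part)
  then show ?case
    by (simp add: sum.delta)
next
  case (Cons a u)
  have "list_pairing C (u @ v) = (\<lambda>gl. \<Sum>ks\<in>{ks. length ks = length gl}.
      list_pairing C u (map2 left_part gl ks) * list_pairing C v (map2 right_part gl ks))"
    using Cons.IH by blast
  then show ?case
    unfolding append_Cons list_pairing.simps deriv_list_def
    by (simp add: deriv_at_coproduct sum_distrib_right sum.swap[of _ "{..<length fl}"])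
qed

lemma list_pairing_vars_append:
  "list_pairing C w (fl @ gl) = (\<Sum>S\<in>Pow {..<length w}.
      list_pairing C (nths w S) fl * list_pairing C (nths w ({..<length w} - S)) gl)"
proof (induction w arbitrary: fl gl)
  case Nil
  then show ?case by (simp add: eps_list_append)
next
  case (Cons a v)
  let ?P = "Pow {..<length v}" and ?c = "\<lambda>S. {..<length v} - S"
  have "list_pairing C (a # v) (fl @ gl)
      = deriv_list C a (\<lambda>fl'. list_pairing C v (fl' @ gl)) fl
        + deriv_list C a (\<lambda>gl'. list_pairing C v (fl @ gl')) gl"
    by (simp add: list_pairing.simps deriv_list_append)
  also have "\<dots> = (\<Sum>S\<in>?P. list_pairing C (a # nths v S) fl * list_pairing C (nths v (?c S)) gl)
      + (\<Sum>S\<in>?P. list_pairing C (nths v S) fl * list_pairing C (a # nths v (?c S)) gl)"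
    unfolding Cons.IH deriv_list_linear by (simp add: list_pairing.simps)
  also have "\<dots> = (\<Sum>S\<in>Pow {..<length (a # v)}.
      list_pairing C (nths (a # v) S) fl * list_pairing C (nths (a # v) ({..<length (a # v)} - S)) gl)"
    unfolding length_Cons sum_Pow_lessThan_Suc
    by (subst add.commute) (auto simp: lessThan_Suc_diff_Suc_image lessThan_Suc_diff_insert_0_Suc_image
        intro!: arg_cong2[where f = "(+)"] sum.cong)
  finally show ?case .
qed

lemma list_pairing_letter_var [simp]: "list_pairing C [a] [x] = var_pairing C a x"
  by (cases x) (simp_all add: list_pairing.simps deriv_list_def deriv_at_def eps_list_Cons if_distrib[of "\<lambda>t. _ * t"] cong: if_cong)

lemma list_pairing_Cons_var:
  "list_pairing C (a # v) [x] = (\<Sum>k\<in>UNIV. var_pairing C a (left_part x k) * list_pairing C v [right_part x k])"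
  by (simp add: list_pairing.simps deriv_list_def deriv_at_def)

lemma list_pairing_letter_Cons:
  "list_pairing C [a] (x # gl) = var_pairing C a x * eps_list gl + eps_list [x] * list_pairing C [a] gl"
  using list_pairing_vars_append[of C "[a]" "[x]" gl] by (simp add: lessThan_Suc Pow_insert)

lemma list_pairing_two_letters_Cons:
  "list_pairing C [a, b] (x # gl) = list_pairing C [a, b] [x] * eps_list gl
     + var_pairing C a x * list_pairing C [b] gl + var_pairing C b x * list_pairing C [a] gl
     + eps_list [x] * list_pairing C [a, b] gl"
  using list_pairing_vars_append[of C "[a, b]" "[x]" gl]
  by (simp add: lessThan_Suc numeral_2_eq_2 Pow_insert nths_Cons insert_Diff_if)

lemma list_pairing_Cons_two_vars:
  "list_pairing C (a # v) [x, y]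
     = (\<Sum>k\<in>UNIV. var_pairing C a (left_part x k) * list_pairing C v [right_part x k, y])
     + (\<Sum>k\<in>UNIV. var_pairing C a (left_part y k) * list_pairing C v [x, right_part y k])"
  by (simp add: list_pairing.simps deriv_list_def deriv_at_def lessThan_Suc numeral_2_eq_2)

section \<open>The defining relations\<close>

lemma leibniz_consts_commutator:
  assumes "leibniz_consts C"
  shows "(\<Sum>k\<in>UNIV. C i a k * C k b j) - (\<Sum>k\<in>UNIV. C i b k * C k a j) = (\<Sum>m\<in>UNIV. C m a b * C i m j)"
proof -
  have "(\<Sum>m\<in>UNIV. C m b j * C i a m) = (\<Sum>m\<in>UNIV. C m a b * C i m j) + (\<Sum>m\<in>UNIV. C m a j * C i b m)"
    using assms unfolding leibniz_consts_def by blast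
  then show ?thesis by (simp add: mult.commute)
qed

lemma leibniz_consts_derivation:
  assumes "leibniz_consts C"
  shows "(\<Sum>l\<in>UNIV. C l a c * C k l m) + (\<Sum>l\<in>UNIV. C l a m * C k c l) = (\<Sum>l\<in>UNIV. C l c m * C k a l)"
  using assms unfolding leibniz_consts_def by metis

lemma list_pairing_commutator_var:
  assumes "leibniz_consts C"
  shows "list_pairing C [a, b] [x] - list_pairing C [b, a] [x] = (\<Sum>m\<in>UNIV. C m a b * var_pairing C m x)"
proof (cases x)
  case (G i j)
  then show ?thesis
    by (simp add: list_pairing_Cons_var[of C a "[b]"] list_pairing_Cons_var[of C b "[a]"]
        leibniz_consts_commutator[OF assms])
next
  case (Gb i j)
  have "list_pairing C [a, b] [x] - list_pairing C [b, a] [x]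
      = - ((\<Sum>k\<in>UNIV. C i a k * C k b j) - (\<Sum>k\<in>UNIV. C i b k * C k a j))"
    by (simp add: Gb list_pairing_Cons_var[of C a "[b]"] list_pairing_Cons_var[of C b "[a]"]
        mult.commute)
  then show ?thesis
    by (simp add: Gb leibniz_consts_commutator[OF assms] sum_negf)
qed

lemma list_pairing_commutator_letters:
  assumes "leibniz_consts C"
  shows "list_pairing C [a, b] gl - list_pairing C [b, a] gl = (\<Sum>m\<in>UNIV. C m a b * list_pairing C [m] gl)"
proof (induction gl)
  case (Cons x gl)
  have "list_pairing C [a, b] (x # gl) - list_pairing C [b, a] (x # gl)
      = (list_pairing C [a, b] [x] - list_pairing C [b, a] [x]) * eps_list gl
        + eps_list [x] * (list_pairing C [a, b] gl - list_pairing C [b, a] gl)"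
    unfolding list_pairing_two_letters_Cons[of C a b x gl] list_pairing_two_letters_Cons[of C b a x gl]
    by (simp add: algebra_simps)
  also have "\<dots> = (\<Sum>m\<in>UNIV. C m a b * var_pairing C m x) * eps_list gl
      + eps_list [x] * (\<Sum>m\<in>UNIV. C m a b * list_pairing C [m] gl)"
    by (simp only: list_pairing_commutator_var[OF assms] Cons.IH)
  also have "\<dots> = (\<Sum>m\<in>UNIV. C m a b * list_pairing C [m] (x # gl))"
    by (simp only: list_pairing_letter_Cons) (simp add: sum_distrib_left sum_distrib_right sum.distrib algebra_simps)
  finally show ?case .
qed simp

lemma list_pairing_word_relation_context:
  fixes c :: "'n::finite \<Rightarrow> 'k::field"
  assumes rel: "\<And>gl. list_pairing C x gl - list_pairing C y gl = (\<Sum>m\<in>UNIV. c m * list_pairing C (z m) gl)"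
  shows "list_pairing C (x @ v) fl - list_pairing C (y @ v) fl = (\<Sum>m\<in>UNIV. c m * list_pairing C (z m @ v) fl)"
    and "list_pairing C (u @ x) fl - list_pairing C (u @ y) fl = (\<Sum>m\<in>UNIV. c m * list_pairing C (u @ z m) fl)"
proof -
  let ?L = "{ks. length ks = length fl}"
  let ?l = "\<lambda>ks. map2 left_part fl ks" and ?r = "\<lambda>ks. map2 right_part fl ks"
  have "list_pairing C (x @ v) fl - list_pairing C (y @ v) fl
      = (\<Sum>ks\<in>?L. (list_pairing C x (?l ks) - list_pairing C y (?l ks)) * list_pairing C v (?r ks))"
    by (simp add: list_pairing_word_append sum_subtractf left_diff_distrib)
  also have "\<dots> = (\<Sum>ks\<in>?L. \<Sum>m\<in>UNIV. c m * (list_pairing C (z m) (?l ks) * list_pairing C v (?r ks)))"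
    by (simp add: rel sum_distrib_right mult.assoc)
  also have "\<dots> = (\<Sum>m\<in>UNIV. c m * list_pairing C (z m @ v) fl)"
    by (subst sum.swap) (simp add: list_pairing_word_append sum_distrib_left)
  finally show "list_pairing C (x @ v) fl - list_pairing C (y @ v) fl
      = (\<Sum>m\<in>UNIV. c m * list_pairing C (z m @ v) fl)" .
  have "list_pairing C (u @ x) fl - list_pairing C (u @ y) fl
      = (\<Sum>ks\<in>?L. list_pairing C u (?l ks) * (list_pairing C x (?r ks) - list_pairing C y (?r ks)))"
    by (simp add: list_pairing_word_append sum_subtractf right_diff_distrib)
  also have "\<dots> = (\<Sum>ks\<in>?L. \<Sum>m\<in>UNIV. c m * (list_pairing C u (?l ks) * list_pairing C (z m) (?r ks)))"
    by (simp add: rel sum_distrib_left mult.left_commute)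
  also have "\<dots> = (\<Sum>m\<in>UNIV. c m * list_pairing C (u @ z m) fl)"
    by (subst sum.swap) (simp add: list_pairing_word_append sum_distrib_left)
  finally show "list_pairing C (u @ x) fl - list_pairing C (u @ y) fl
      = (\<Sum>m\<in>UNIV. c m * list_pairing C (u @ z m) fl)" .
qed

lemma list_pairing_commutator:
  assumes "leibniz_consts C"
  shows "list_pairing C (u @ [a, b] @ v) fl - list_pairing C (u @ [b, a] @ v) fl
       = (\<Sum>m\<in>UNIV. C m a b * list_pairing C (u @ [m] @ v) fl)"
  by (intro list_pairing_word_relation_context list_pairing_commutator_letters assms)

lemma list_pairing_bracket_relation:
  assumes "leibniz_consts C"
  shows "(\<Sum>l\<in>UNIV. \<Sum>m\<in>UNIV. C k l m * list_pairing C w [G l i, G m j])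
       = (\<Sum>r\<in>UNIV. C r i j * list_pairing C w [G k r])"
proof (induction w arbitrary: k)
  case Nil
  then show ?case
    by (subst sum.swap) (simp add: eps_list_Cons if_distrib[of "\<lambda>t. _ * t"] cong: if_cong)
next
  case (Cons a v)
  define X where "X c m = list_pairing C v [G c i, G m j]" for c m
  have first: "(\<Sum>l\<in>UNIV. \<Sum>m\<in>UNIV. C k l m * (\<Sum>c\<in>UNIV. C l a c * X c m))
      = (\<Sum>c\<in>UNIV. \<Sum>m\<in>UNIV. (\<Sum>l\<in>UNIV. C l a c * C k l m) * X c m)"
    by (simp add: sum_distrib_left sum_distrib_right mult_ac)
       (subst sum.swap, subst (2) sum.swap, subst sum.swap, rule refl)
  have second: "(\<Sum>l\<in>UNIV. \<Sum>m\<in>UNIV. C k l m * (\<Sum>c\<in>UNIV. C m a c * X l c))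
      = (\<Sum>c\<in>UNIV. \<Sum>m\<in>UNIV. (\<Sum>l\<in>UNIV. C l a m * C k c l) * X c m)"
    by (simp add: sum_distrib_left sum_distrib_right mult_ac) (subst sum.swap, rule refl)
  have "(\<Sum>l\<in>UNIV. \<Sum>m\<in>UNIV. C k l m * list_pairing C (a # v) [G l i, G m j])
      = (\<Sum>l\<in>UNIV. \<Sum>m\<in>UNIV. C k l m * (\<Sum>c\<in>UNIV. C l a c * X c m))
        + (\<Sum>l\<in>UNIV. \<Sum>m\<in>UNIV. C k l m * (\<Sum>c\<in>UNIV. C m a c * X l c))"
    by (simp add: list_pairing_Cons_two_vars X_def distrib_left sum.distrib)
  also have "\<dots> = (\<Sum>c\<in>UNIV. \<Sum>m\<in>UNIV.
      ((\<Sum>l\<in>UNIV. C l a c * C k l m) + (\<Sum>l\<in>UNIV. C l a m * C k c l)) * X c m)"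
    unfolding first second by (simp add: sum.distrib distrib_right)
  also have "\<dots> = (\<Sum>c\<in>UNIV. \<Sum>m\<in>UNIV. (\<Sum>l\<in>UNIV. C l c m * C k a l) * X c m)"
    by (simp only: leibniz_consts_derivation[OF assms])
  also have "\<dots> = (\<Sum>l\<in>UNIV. C k a l * (\<Sum>c\<in>UNIV. \<Sum>m\<in>UNIV. C l c m * X c m))"
    by (simp add: sum_distrib_left sum_distrib_right mult_ac)
       (subst sum.swap, rule sum.cong[OF refl], rule sum.swap)
  also have "\<dots> = (\<Sum>r\<in>UNIV. C r i j * list_pairing C (a # v) [G k r])"
    by (simp add: X_def Cons.IH list_pairing_Cons_var sum_distrib_left mult_ac)
       (subst sum.swap, rule refl)
  finally show ?case .
qed

lemma list_pairing_G_Gb_relation: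
  "(\<Sum>k\<in>UNIV. list_pairing C w [G i k, Gb k j]) = (if i = j then list_pairing C w [] else 0)"
proof (induction w arbitrary: i j)
  case Nil
  then show ?case
    by (simp add: eps_list_Cons if_distrib[of "\<lambda>t. _ * t"] cong: if_cong)
next
  case (Cons a v)
  have "(\<Sum>k\<in>UNIV. list_pairing C (a # v) [G i k, Gb k j])
      = (\<Sum>k\<in>UNIV. \<Sum>c\<in>UNIV. C i a c * list_pairing C v [G c k, Gb k j])
        - (\<Sum>k\<in>UNIV. \<Sum>c\<in>UNIV. C c a j * list_pairing C v [G i k, Gb k c])"
    by (simp add: list_pairing_Cons_two_vars sum_negf sum_subtractf)
  also have "\<dots> = (\<Sum>c\<in>UNIV. C i a c * (\<Sum>k\<in>UNIV. list_pairing C v [G c k, Gb k j]))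
        - (\<Sum>c\<in>UNIV. C c a j * (\<Sum>k\<in>UNIV. list_pairing C v [G i k, Gb k c]))"
    unfolding sum_distrib_left by (subst (1 2) sum.swap) (rule refl)
  also have "\<dots> = 0"
    by (simp add: Cons.IH if_distrib[of "\<lambda>t. _ * t"] cong: if_cong)
  finally show ?case
    by simp
qed

lemma list_pairing_Gb_G_relation:
  "(\<Sum>k\<in>UNIV. list_pairing C w [Gb i k, G k j]) = (if i = j then list_pairing C w [] else 0)"
proof (cases w)
  case Nil
  then show ?thesis
    by (simp add: eps_list_Cons if_distrib[of "\<lambda>t. _ * t"] cong: if_cong)
next
  case (Cons a v)
  have "(\<Sum>k\<in>UNIV. list_pairing C (a # v) [Gb i k, G k j])
      = (\<Sum>k\<in>UNIV. \<Sum>c\<in>UNIV. C k a c * list_pairing C v [Gb i k, G c j])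
        - (\<Sum>k\<in>UNIV. \<Sum>c\<in>UNIV. C c a k * list_pairing C v [Gb i c, G k j])"
    by (simp add: list_pairing_Cons_two_vars sum_negf sum_subtractf)
  also have "\<dots> = 0"
    by (subst (2) sum.swap) simp
  finally show ?thesis
    using Cons by simp
qed

lemma list_pairing_relations_context:
  assumes "leibniz_consts C"
  shows "(\<Sum>l\<in>UNIV. \<Sum>m\<in>UNIV. C k l m * list_pairing C w ([G l i, G m j] @ fl))
           - (\<Sum>r\<in>UNIV. C r i j * list_pairing C w ([G k r] @ fl)) = 0"
    and "(\<Sum>k\<in>UNIV. list_pairing C w ([G i k, Gb k j] @ fl)) - (if i = j then list_pairing C w fl else 0) = 0"
    and "(\<Sum>k\<in>UNIV. list_pairing C w ([Gb i k, G k j] @ fl)) - (if i = j then list_pairing C w fl else 0) = 0"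
proof -
  let ?P = "Pow {..<length w}" and ?R = "\<lambda>S. list_pairing C (nths w ({..<length w} - S)) fl"
  have "(\<Sum>l\<in>UNIV. \<Sum>m\<in>UNIV. C k l m * list_pairing C w ([G l i, G m j] @ fl))
           - (\<Sum>r\<in>UNIV. C r i j * list_pairing C w ([G k r] @ fl))
      = (\<Sum>S\<in>?P. ((\<Sum>l\<in>UNIV. \<Sum>m\<in>UNIV. C k l m * list_pairing C (nths w S) [G l i, G m j])
           - (\<Sum>r\<in>UNIV. C r i j * list_pairing C (nths w S) [G k r])) * ?R S)"
    unfolding list_pairing_vars_append[of C w _ fl]
    by (simp add: sum_distrib_left sum_distrib_right left_diff_distrib sum_subtractf mult.assoc
        sum.swap[where B = ?P])
  then show "(\<Sum>l\<in>UNIV. \<Sum>m\<in>UNIV. C k l m * list_pairing C w ([G l i, G m j] @ fl))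
           - (\<Sum>r\<in>UNIV. C r i j * list_pairing C w ([G k r] @ fl)) = 0"
    by (simp add: list_pairing_bracket_relation[OF assms])
  have "(\<Sum>k\<in>UNIV. list_pairing C w ([G i k, Gb k j] @ fl))
      = (\<Sum>S\<in>?P. (\<Sum>k\<in>UNIV. list_pairing C (nths w S) [G i k, Gb k j]) * ?R S)"
    unfolding list_pairing_vars_append[of C w _ fl] by (simp add: sum_distrib_right sum.swap[where B = ?P])
  also have "\<dots> = (if i = j then list_pairing C w ([] @ fl) else 0)"
    unfolding list_pairing_G_Gb_relation list_pairing_vars_append[of C w "[]"] by simp
  finally show "(\<Sum>k\<in>UNIV. list_pairing C w ([G i k, Gb k j] @ fl)) - (if i = j then list_pairing C w fl else 0) = 0"
    by simp
  have "(\<Sum>k\<in>UNIV. list_pairing C w ([Gb i k, G k j] @ fl))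
      = (\<Sum>S\<in>?P. (\<Sum>k\<in>UNIV. list_pairing C (nths w S) [Gb i k, G k j]) * ?R S)"
    unfolding list_pairing_vars_append[of C w _ fl] by (simp add: sum_distrib_right sum.swap[where B = ?P])
  also have "\<dots> = (if i = j then list_pairing C w ([] @ fl) else 0)"
    unfolding list_pairing_Gb_G_relation list_pairing_vars_append[of C w "[]"] by simp
  finally show "(\<Sum>k\<in>UNIV. list_pairing C w ([Gb i k, G k j] @ fl)) - (if i = j then list_pairing C w fl else 0) = 0"
    by simp
qed

section \<open>Existence and uniqueness\<close>

definition mset_pairing :: "('n::finite \<Rightarrow> 'n \<Rightarrow> 'n \<Rightarrow> 'k::field) \<Rightarrow> ('n, 'k) pairing" where
  "mset_pairing C w f = list_pairing C w (SOME fl. mset fl = f)"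

lemma mset_pairing_mset [simp]: "mset_pairing C w (mset fl) = list_pairing C w fl"
proof -
  have "mset (SOME gl. mset gl = mset fl) = mset fl"
    by (rule someI_ex) blast
  then show ?thesis
    unfolding mset_pairing_def by (rule list_pairing_mset_eq)
qed

lemma hopf_pairing_mset_pairing:
  fixes C :: "'n::finite \<Rightarrow> 'n \<Rightarrow> 'n \<Rightarrow> 'k::field"
  assumes "leibniz_consts C"
  shows "hopf_pairing C (mset_pairing C)"
proof -
  have all_mset: "(\<forall>f. R f) \<longleftrightarrow> (\<forall>fl. R (mset fl))" for R :: "'n gvar multiset \<Rightarrow> bool"
    by (metis ex_mset)
  have mset_add: "mset fl + {#x, y#} = mset ([x, y] @ fl)" "mset fl + {#x#} = mset ([x] @ fl)"
    for fl and x y :: "'n gvar"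
    by simp_all
  have "vanishes_U C (mset_pairing C)"
    unfolding vanishes_U_def all_mset
    by (simp only: mset_pairing_mset list_pairing_commutator[OF assms] diff_self simp_thms)
  moreover have "vanishes_O C (mset_pairing C)"
    unfolding vanishes_O_def all_mset mset_add
    by (simp only: mset_pairing_mset list_pairing_relations_context[OF assms] simp_thms)
  moreover have "delta_U_cond (mset_pairing C)"
    unfolding delta_U_cond_def all_mset
    by (simp only: mset_append[symmetric] mset_pairing_mset list_pairing_vars_append simp_thms)
  moreover have "eps_U_cond (mset_pairing C)"
    using mset_pairing_mset[of C _ "[]"] by (simp add: eps_U_cond_def)
  moreover have "delta_O_cond (mset_pairing C)"
    unfolding delta_O_cond_def by (simp only: mset_pairing_mset list_pairing_word_append simp_thms)
  moreover have "eps_O_cond (mset_pairing C)"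
    unfolding eps_O_cond_def all_mset by (simp add: eps_list_def)
  ultimately show ?thesis
    unfolding hopf_pairing_def by blast
qed

lemma pairs_generators_mset_pairing: "pairs_generators C (mset_pairing C)"
  using mset_pairing_mset[of C _ "[_]"] by (simp add: pairs_generators_def)

lemma delta_U_cond_letter:
  assumes "delta_U_cond p"
  shows "p [a] (f + g) = p [] f * p [a] g + p [a] f * p [] g"
  using assms unfolding delta_U_cond_def by (simp add: lessThan_Suc Pow_insert)

lemma hopf_pairing_Gb:
  assumes hopf: "hopf_pairing C p" and gen: "pairs_generators C p"
  shows "p [a] {#Gb i j#} = - C i a j"
proof -
  have dU: "delta_U_cond p" and eU: "p [a] {#} = 0" and eO: "p [] {#x#} = (if gdiag x then 1 else 0)" for x
    using hopf unfolding hopf_pairing_def eps_U_cond_def eps_O_cond_def by auto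
  have "(\<Sum>k\<in>UNIV. p [a] ({#} + {#G i k, Gb k j#})) - (if i = j then p [a] {#} else 0) = 0"
    using hopf unfolding hopf_pairing_def vanishes_O_def by blast
  then have "(\<Sum>k\<in>UNIV. p [a] ({#G i k#} + {#Gb k j#})) = 0"
    by (simp add: eU add_mset_commute)
  moreover have "p [a] ({#G i k#} + {#Gb k j#})
      = (if i = k then p [a] {#Gb k j#} else 0) + (if k = j then C i a k else 0)" for k
    using delta_U_cond_letter[OF dU, of a "{#G i k#}" "{#Gb k j#}"] gen
    by (simp add: eO pairs_generators_def)
  ultimately show ?thesis
    by (simp add: sum.distrib eq_neg_iff_add_eq_0)
qed

lemma hopf_pairing_letter:
  fixes C :: "'n::finite \<Rightarrow> 'n \<Rightarrow> 'n \<Rightarrow> 'k::field"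
  assumes hopf: "hopf_pairing C p" and gen: "pairs_generators C p"
  shows "p [a] (mset gl) = list_pairing C [a] gl"
proof (induction gl)
  case Nil
  then show ?case
    using hopf by (simp add: hopf_pairing_def eps_U_cond_def)
next
  case (Cons x gl)
  have eO: "p [] (mset fl) = eps_list fl" for fl
    using hopf by (simp add: hopf_pairing_def eps_O_cond_def eps_list_def)
  have "p [a] {#x#} = var_pairing C a x"
    using gen hopf_pairing_Gb[OF hopf gen] by (cases x) (simp_all add: pairs_generators_def)
  moreover have "delta_U_cond p"
    using hopf by (simp add: hopf_pairing_def)
  ultimately have "p [a] ({#x#} + mset gl) = list_pairing C [a] (x # gl)"
    using delta_U_cond_letter[of p a "{#x#}" "mset gl"] eO[of "[x]"] eO[of gl]
    by (simp add: Cons.IH list_pairing_letter_Cons mult.commute)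
  then show ?case
    by simp
qed

lemma hopf_pairing_eq_list_pairing:
  fixes C :: "'n::finite \<Rightarrow> 'n \<Rightarrow> 'n \<Rightarrow> 'k::field"
  assumes hopf: "hopf_pairing C p" and gen: "pairs_generators C p"
  shows "p w (mset fl) = list_pairing C w fl"
proof (induction w arbitrary: fl)
  case Nil
  then show ?case
    using hopf by (simp add: hopf_pairing_def eps_O_cond_def eps_list_def)
next
  case (Cons a v)
  have "p ([a] @ v) (mset fl) = (\<Sum>ks\<in>{ks. length ks = length fl}.
      p [a] (mset (map2 left_part fl ks)) * p v (mset (map2 right_part fl ks)))"
    using hopf unfolding hopf_pairing_def delta_O_cond_def by blast
  also have "\<dots> = (\<Sum>ks\<in>{ks. length ks = length fl}.
      list_pairing C [a] (map2 left_part fl ks) * list_pairing C v (map2 right_part fl ks))"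
    by (simp only: hopf_pairing_letter[OF hopf gen] Cons.IH)
  also have "\<dots> = list_pairing C ([a] @ v) fl"
    by (rule list_pairing_word_append[symmetric])
  finally show ?case
    by simp
qed

lemma hopf_pairing_unique:
  fixes C :: "'n::finite \<Rightarrow> 'n \<Rightarrow> 'n \<Rightarrow> 'k::field"
  assumes "hopf_pairing C p" and "pairs_generators C p"
  shows "p = mset_pairing C"
  using hopf_pairing_eq_list_pairing[OF assms] by (metis ex_mset mset_pairing_mset ext)

section \<open>Change of basis\<close>

definition expand_var :: "('n::finite \<Rightarrow> 'n \<Rightarrow> 'k::field) \<Rightarrow> ('n \<Rightarrow> 'n \<Rightarrow> 'k) \<Rightarrow> 'n gvar \<Rightarrow>
    ('n gvar \<Rightarrow> 'k) \<Rightarrow> 'k" where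
  "expand_var P Q x R = (\<Sum>y\<in>UNIV. subst_coef P Q x y * R (subst_var x y))"

definition expand_vars :: "('n::finite \<Rightarrow> 'n \<Rightarrow> 'k::field) \<Rightarrow> ('n \<Rightarrow> 'n \<Rightarrow> 'k) \<Rightarrow> 'n gvar list \<Rightarrow>
    ('n gvar list \<Rightarrow> 'k) \<Rightarrow> 'k" where
  "expand_vars P Q fl \<Phi> = (\<Sum>acs\<in>{acs. length acs = length fl}.
     (\<Prod>t<length fl. subst_coef P Q (fl ! t) (acs ! t)) * \<Phi> (map2 subst_var fl acs))"

definition expand_word :: "('n::finite \<Rightarrow> 'n \<Rightarrow> 'k::field) \<Rightarrow> 'n list \<Rightarrow> ('n list \<Rightarrow> 'k) \<Rightarrow> 'k" where
  "expand_word P w \<Psi> = (\<Sum>as\<in>{as. length as = length w}. (\<Prod>t<length w. P (as ! t) (w ! t)) * \<Psi> as)"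

lemma transported_eq_expand:
  "transported P Q p w fl = expand_word P w (\<lambda>as. expand_vars P Q fl (\<lambda>ml. p as (mset ml)))"
  by (simp add: transported_def expand_word_def expand_vars_def)

lemma expand_vars_Nil [simp]: "expand_vars P Q [] \<Phi> = \<Phi> []"
  by (simp add: expand_vars_def)

lemma expand_vars_Cons:
  "expand_vars P Q (x # fl) \<Phi> = expand_var P Q x (\<lambda>z. expand_vars P Q fl (\<lambda>ml. \<Phi> (z # ml)))"
  by (simp add: expand_vars_def expand_var_def sum_lists_length_Suc prod.lessThan_Suc_shift
      sum_distrib_left mult.assoc del: prod.lessThan_Suc)

lemma expand_word_Nil [simp]: "expand_word P [] \<Psi> = \<Psi> []"
  by (simp add: expand_word_def)

lemma expand_word_Cons:
  "expand_word P (a # v) \<Psi> = (\<Sum>b\<in>UNIV. P b a * expand_word P v (\<lambda>as. \<Psi> (b # as)))"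
  by (simp add: expand_word_def sum_lists_length_Suc prod.lessThan_Suc_shift sum_distrib_left mult.assoc
      del: prod.lessThan_Suc)

lemma expand_var_add: "expand_var P Q x (\<lambda>z. R z + S z) = expand_var P Q x R + expand_var P Q x S"
  by (simp add: expand_var_def distrib_left sum.distrib)

lemma expand_var_sum:
  "expand_var P Q x (\<lambda>z. \<Sum>i\<in>I. c i * R i z) = (\<Sum>i\<in>I. c i * expand_var P Q x (R i))"
  by (simp add: expand_var_def sum_distrib_left mult.left_commute sum.swap[of _ I])

lemma expand_var_scale: "expand_var P Q x (\<lambda>z. R z * c) = expand_var P Q x R * c"
  by (simp add: expand_var_def sum_distrib_right mult.assoc)

lemma expand_vars_add:
  "expand_vars P Q fl (\<lambda>ml. \<Phi> ml + \<Psi> ml) = expand_vars P Q fl \<Phi> + expand_vars P Q fl \<Psi>"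
  by (simp add: expand_vars_def distrib_left sum.distrib)

lemma expand_vars_sum:
  "expand_vars P Q fl (\<lambda>ml. \<Sum>i\<in>I. c i * \<Phi> i ml) = (\<Sum>i\<in>I. c i * expand_vars P Q fl (\<Phi> i))"
  by (simp add: expand_vars_def sum_distrib_left mult.left_commute sum.swap[of _ I])

lemma expand_vars_scale: "expand_vars P Q fl (\<lambda>ml. c * \<Phi> ml) = c * expand_vars P Q fl \<Phi>"
  by (simp add: expand_vars_def sum_distrib_left mult.left_commute)

lemma expand_word_sum:
  "expand_word P w (\<lambda>as. \<Sum>i\<in>I. c i * \<Psi> i as) = (\<Sum>i\<in>I. c i * expand_word P w (\<Psi> i))"
  by (simp add: expand_word_def sum_distrib_left mult.left_commute sum.swap[of _ I])

lemma deriv_list_expand_var: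
  "deriv_list C a (\<lambda>gl. expand_var P Q x (\<lambda>z. F z gl)) fl = expand_var P Q x (\<lambda>z. deriv_list C a (F z) fl)"
  by (simp add: expand_var_def deriv_list_linear)

lemma deriv_list_expand_word:
  "deriv_list C a (\<lambda>gl. expand_word P w (\<lambda>as. F as gl)) fl = expand_word P w (\<lambda>as. deriv_list C a (F as) fl)"
  by (simp add: expand_word_def deriv_list_linear)

lemma inverse_matrices_delta:
  assumes "inverse_matrices P Q"
  shows "(\<Sum>k\<in>UNIV. P i k * Q k j) = (if i = j then 1 else 0)"
    and "(\<Sum>k\<in>UNIV. Q i k * P k j) = (if i = j then 1 else 0)"
  using assms unfolding inverse_matrices_def by blast+

lemma change_consts_mult_inverse:
  assumes "inverse_matrices P Q"
  shows "(\<Sum>k\<in>UNIV. change_consts P Q C i a k * Q k c) = (\<Sum>b\<in>UNIV. \<Sum>m\<in>UNIV. Q i m * C m b c * P b a)"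
proof -
  have "(\<Sum>k\<in>UNIV. change_consts P Q C i a k * Q k c)
      = (\<Sum>k\<in>UNIV. \<Sum>b\<in>UNIV. \<Sum>d\<in>UNIV. \<Sum>m\<in>UNIV. Q i m * C m b d * P b a * (P d k * Q k c))"
    by (simp add: change_consts_def sum_distrib_right mult.assoc)
  also have "\<dots> = (\<Sum>b\<in>UNIV. \<Sum>d\<in>UNIV. \<Sum>m\<in>UNIV. \<Sum>k\<in>UNIV. Q i m * C m b d * P b a * (P d k * Q k c))"
    by (rule sum_swap_innermost4)
  also have "\<dots> = (\<Sum>b\<in>UNIV. \<Sum>d\<in>UNIV. (\<Sum>m\<in>UNIV. Q i m * C m b d * P b a) * (\<Sum>k\<in>UNIV. P d k * Q k c))"
    by (simp only: sum_distrib_right) (simp only: sum_distrib_left)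
  also have "\<dots> = (\<Sum>b\<in>UNIV. \<Sum>m\<in>UNIV. Q i m * C m b c * P b a)"
    by (simp add: inverse_matrices_delta[OF assms] if_distrib[of "\<lambda>t. _ * t"] cong: if_cong)
  finally show ?thesis .
qed

lemma mult_change_consts:
  assumes "inverse_matrices P Q"
  shows "(\<Sum>k\<in>UNIV. P c k * change_consts P Q C k a j) = (\<Sum>b\<in>UNIV. \<Sum>d\<in>UNIV. C c b d * P b a * P d j)"
proof -
  have "(\<Sum>k\<in>UNIV. P c k * change_consts P Q C k a j)
      = (\<Sum>k\<in>UNIV. \<Sum>b\<in>UNIV. \<Sum>d\<in>UNIV. \<Sum>m\<in>UNIV. P c k * Q k m * (C m b d * P b a * P d j))"
    by (simp add: change_consts_def sum_distrib_left mult_ac)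
  also have "\<dots> = (\<Sum>b\<in>UNIV. \<Sum>d\<in>UNIV. \<Sum>m\<in>UNIV. \<Sum>k\<in>UNIV. P c k * Q k m * (C m b d * P b a * P d j))"
    by (rule sum_swap_innermost4)
  also have "\<dots> = (\<Sum>b\<in>UNIV. \<Sum>d\<in>UNIV. \<Sum>m\<in>UNIV. (\<Sum>k\<in>UNIV. P c k * Q k m) * (C m b d * P b a * P d j))"
    by (simp only: sum_distrib_right)
  also have "\<dots> = (\<Sum>b\<in>UNIV. \<Sum>d\<in>UNIV. C c b d * P b a * P d j)"
    by (simp add: inverse_matrices_delta[OF assms] if_distrib[of "\<lambda>t. t * _"] cong: if_cong)
  finally show ?thesis .
qed

lemma expand_var_G: "expand_var P Q (G i j) R = (\<Sum>a\<in>UNIV. Q i a * (\<Sum>c\<in>UNIV. P c j * R (G a c)))"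
  by (simp add: expand_var_def sum_UNIV_prod sum_distrib_left mult.assoc)

lemma expand_var_Gb: "expand_var P Q (Gb i j) R = (\<Sum>c\<in>UNIV. P c j * (\<Sum>a\<in>UNIV. Q i a * R (Gb a c)))"
  by (simp add: expand_var_def sum_UNIV_prod sum_distrib_left mult_ac) (rule sum.swap)

text \<open>
  In matrix form: x~'_a = sum_b P b a x~_b acts on G' = Q G P by left multiplication with
  Q (sum_b P b a ad x_b) P, which is the matrix of ad x'_a because P Q = 1; likewise on Gb' by
  right multiplication.
\<close>
lemma expand_var_deriv_change_consts_G:
  fixes C :: "'n::finite \<Rightarrow> 'n \<Rightarrow> 'n \<Rightarrow> 'k::field"
  assumes inv: "inverse_matrices P Q"
  shows "(\<Sum>k\<in>UNIV. var_pairing (change_consts P Q C) a (left_part (G i j) k) * expand_var P Q (right_part (G i j) k) R)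
       = (\<Sum>b\<in>UNIV. P b a * expand_var P Q (G i j) (\<lambda>z. \<Sum>k\<in>UNIV. var_pairing C b (left_part z k) * R (right_part z k)))"
proof -
  define W where "W c = (\<Sum>d\<in>UNIV. P d j * R (G c d))" for c
  have W_swap: "(\<Sum>d\<in>UNIV. P d j * (\<Sum>k\<in>UNIV. C m b k * R (G k d))) = (\<Sum>k\<in>UNIV. C m b k * W k)" for m b
    unfolding W_def sum_distrib_left by (subst sum.swap) (simp add: mult.left_commute)
  have "(\<Sum>k\<in>UNIV. var_pairing (change_consts P Q C) a (left_part (G i j) k) * expand_var P Q (right_part (G i j) k) R)
      = (\<Sum>k\<in>UNIV. change_consts P Q C i a k * (\<Sum>c\<in>UNIV. Q k c * W c))"
    by (simp add: expand_var_G W_def)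
  also have "\<dots> = (\<Sum>c\<in>UNIV. (\<Sum>k\<in>UNIV. change_consts P Q C i a k * Q k c) * W c)"
    by (simp add: sum_distrib_left sum_distrib_right mult.assoc) (rule sum.swap)
  also have "\<dots> = (\<Sum>c\<in>UNIV. \<Sum>b\<in>UNIV. \<Sum>m\<in>UNIV. P b a * (Q i m * (C m b c * W c)))"
    by (simp only: change_consts_mult_inverse[OF inv]) (simp add: sum_distrib_left sum_distrib_right mult_ac)
  also have "\<dots> = (\<Sum>b\<in>UNIV. P b a * (\<Sum>m\<in>UNIV. Q i m * (\<Sum>c\<in>UNIV. C m b c * W c)))"
    by (subst sum_swap_innermost3) (simp add: sum_distrib_left)
  also have "\<dots> = (\<Sum>b\<in>UNIV. P b a * expand_var P Q (G i j) (\<lambda>z. \<Sum>k\<in>UNIV. var_pairing C b (left_part z k) * R (right_part z k)))"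
    by (simp add: expand_var_G W_swap)
  finally show ?thesis .
qed

lemma expand_var_deriv_change_consts_Gb:
  fixes C :: "'n::finite \<Rightarrow> 'n \<Rightarrow> 'n \<Rightarrow> 'k::field"
  assumes inv: "inverse_matrices P Q"
  shows "(\<Sum>k\<in>UNIV. var_pairing (change_consts P Q C) a (left_part (Gb i j) k) * expand_var P Q (right_part (Gb i j) k) R)
       = (\<Sum>b\<in>UNIV. P b a * expand_var P Q (Gb i j) (\<lambda>z. \<Sum>k\<in>UNIV. var_pairing C b (left_part z k) * R (right_part z k)))"
proof -
  define V where "V d = (\<Sum>c\<in>UNIV. Q i c * R (Gb c d))" for d
  have V_swap: "(\<Sum>c\<in>UNIV. Q i c * (\<Sum>k\<in>UNIV. C k b e * R (Gb c k))) = (\<Sum>k\<in>UNIV. C k b e * V k)" for b e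
    unfolding V_def sum_distrib_left by (subst sum.swap) (simp add: mult.left_commute)
  have "(\<Sum>k\<in>UNIV. var_pairing (change_consts P Q C) a (left_part (Gb i j) k) * expand_var P Q (right_part (Gb i j) k) R)
      = - (\<Sum>k\<in>UNIV. change_consts P Q C k a j * (\<Sum>d\<in>UNIV. P d k * V d))"
    by (simp add: expand_var_Gb V_def sum_negf)
  also have "\<dots> = - (\<Sum>d\<in>UNIV. (\<Sum>k\<in>UNIV. P d k * change_consts P Q C k a j) * V d)"
    by (simp add: sum_distrib_left sum_distrib_right mult_ac) (rule sum.swap)
  also have "\<dots> = - (\<Sum>d\<in>UNIV. \<Sum>b\<in>UNIV. \<Sum>e\<in>UNIV. P b a * (P e j * (C d b e * V d)))"
    by (simp only: mult_change_consts[OF inv]) (simp add: sum_distrib_left sum_distrib_right mult_ac)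
  also have "\<dots> = - (\<Sum>b\<in>UNIV. P b a * (\<Sum>e\<in>UNIV. P e j * (\<Sum>d\<in>UNIV. C d b e * V d)))"
    by (subst sum_swap_innermost3) (simp add: sum_distrib_left)
  also have "\<dots> = (\<Sum>b\<in>UNIV. P b a * expand_var P Q (Gb i j) (\<lambda>z. \<Sum>k\<in>UNIV. var_pairing C b (left_part z k) * R (right_part z k)))"
    by (simp add: expand_var_Gb V_swap sum_negf)
  finally show ?thesis .
qed

lemma expand_var_deriv_change_consts:
  fixes C :: "'n::finite \<Rightarrow> 'n \<Rightarrow> 'n \<Rightarrow> 'k::field"
  assumes "inverse_matrices P Q"
  shows "(\<Sum>k\<in>UNIV. var_pairing (change_consts P Q C) a (left_part x k) * expand_var P Q (right_part x k) R)
       = (\<Sum>b\<in>UNIV. P b a * expand_var P Q x (\<lambda>z. \<Sum>k\<in>UNIV. var_pairing C b (left_part z k) * R (right_part z k)))"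
  using expand_var_deriv_change_consts_G[OF assms] expand_var_deriv_change_consts_Gb[OF assms]
  by (cases x) simp_all

lemma expand_var_gdiag:
  assumes "inverse_matrices P Q"
  shows "expand_var P Q x (\<lambda>z. if gdiag z then 1 else 0) = (if gdiag x then 1 else 0)"
proof (cases x)
  case (G i j)
  then show ?thesis
    by (simp add: expand_var_G inverse_matrices_delta[OF assms] if_distrib[of "\<lambda>t. _ * t"] cong: if_cong)
next
  case (Gb i j)
  have "(\<Sum>c\<in>UNIV. P c j * Q i c) = (\<Sum>c\<in>UNIV. Q i c * P c j)"
    by (simp add: mult.commute)
  with Gb show ?thesis
    by (simp add: expand_var_Gb inverse_matrices_delta[OF assms] if_distrib[of "\<lambda>t. _ * t"] cong: if_cong)
qed

lemma expand_vars_eps_list: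
  assumes "inverse_matrices P Q"
  shows "expand_vars P Q fl eps_list = eps_list fl"
proof (induction fl)
  case (Cons x fl)
  have eps_list_Cons_mult: "eps_list (z # ml) = (if gdiag z then 1 else 0) * eps_list ml" for z ml
    by (simp add: eps_list_Cons)
  show ?case
    by (simp add: expand_vars_Cons eps_list_Cons_mult expand_vars_scale Cons.IH expand_var_scale
        expand_var_gdiag[OF assms])
qed simp

lemma deriv_list_expand_vars:
  fixes C :: "'n::finite \<Rightarrow> 'n \<Rightarrow> 'n \<Rightarrow> 'k::field"
  assumes inv: "inverse_matrices P Q"
  shows "deriv_list (change_consts P Q C) a (\<lambda>gl. expand_vars P Q gl \<Phi>) fl
       = (\<Sum>b\<in>UNIV. P b a * expand_vars P Q fl (deriv_list C b \<Phi>))"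
proof (induction fl arbitrary: \<Phi>)
  case Nil
  then show ?case
    by (simp add: deriv_list_def)
next
  case (Cons x fl)
  define R where "R = (\<lambda>z. expand_vars P Q fl (\<lambda>ml. \<Phi> (z # ml)))"
  have "deriv_list (change_consts P Q C) a (\<lambda>gl. expand_vars P Q gl \<Phi>) (x # fl)
      = (\<Sum>k\<in>UNIV. var_pairing (change_consts P Q C) a (left_part x k) * expand_var P Q (right_part x k) R)
        + expand_var P Q x (\<lambda>z. deriv_list (change_consts P Q C) a (\<lambda>gl. expand_vars P Q gl (\<lambda>ml. \<Phi> (z # ml))) fl)"
    by (simp add: deriv_list_Cons expand_vars_Cons R_def deriv_list_expand_var)
  also have "\<dots> = (\<Sum>b\<in>UNIV. P b a *
        (expand_var P Q x (\<lambda>z. \<Sum>k\<in>UNIV. var_pairing C b (left_part z k) * R (right_part z k))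
         + expand_var P Q x (\<lambda>z. expand_vars P Q fl (deriv_list C b (\<lambda>ml. \<Phi> (z # ml))))))"
    by (simp add: expand_var_deriv_change_consts[OF inv] Cons.IH expand_var_sum distrib_left sum.distrib)
  also have "\<dots> = (\<Sum>b\<in>UNIV. P b a * expand_vars P Q (x # fl) (deriv_list C b \<Phi>))"
    by (simp add: expand_vars_Cons deriv_list_Cons expand_vars_add expand_vars_sum expand_var_add R_def)
  finally show ?case .
qed

lemma list_pairing_change_consts:
  fixes C :: "'n::finite \<Rightarrow> 'n \<Rightarrow> 'n \<Rightarrow> 'k::field"
  assumes inv: "inverse_matrices P Q"
  shows "list_pairing (change_consts P Q C) w fl = expand_word P w (\<lambda>as. expand_vars P Q fl (list_pairing C as))"
proof (induction w arbitrary: fl)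
  case Nil
  have "list_pairing C [] = eps_list"
    by (rule ext) simp
  then show ?case
    by (simp add: expand_vars_eps_list[OF inv])
next
  case (Cons a v)
  have IH: "list_pairing (change_consts P Q C) v = (\<lambda>gl. expand_word P v (\<lambda>as. expand_vars P Q gl (list_pairing C as)))"
    using Cons.IH by blast
  have "list_pairing (change_consts P Q C) (a # v) fl
      = expand_word P v (\<lambda>as. deriv_list (change_consts P Q C) a (\<lambda>gl. expand_vars P Q gl (list_pairing C as)) fl)"
    by (simp add: list_pairing.simps IH deriv_list_expand_word)
  also have "\<dots> = expand_word P v (\<lambda>as. \<Sum>b\<in>UNIV. P b a * expand_vars P Q fl (list_pairing C (b # as)))"
    by (simp add: deriv_list_expand_vars[OF inv] list_pairing.simps)
  also have "\<dots> = expand_word P (a # v) (\<lambda>as. expand_vars P Q fl (list_pairing C as))"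
    by (simp add: expand_word_sum expand_word_Cons)
  finally show ?case .
qed

theorem proposition3p3:
  fixes C :: "'n::finite \<Rightarrow> 'n \<Rightarrow> 'n \<Rightarrow> 'k::field"
  assumes "leibniz_consts C"
  shows "(\<exists>!p. hopf_pairing C p \<and> pairs_generators C p) \<and>
    (\<forall>P Q. inverse_matrices P Q \<longrightarrow>
      (\<forall>p p'. hopf_pairing C p \<and> pairs_generators C p \<and>
              hopf_pairing (change_consts P Q C) p' \<and> pairs_generators (change_consts P Q C) p' \<longrightarrow>
              (\<forall>w fl. p' w (mset fl) = transported P Q p w fl)))"
proof (intro conjI allI impI)
  show "\<exists>!p. hopf_pairing C p \<and> pairs_generators C p"
    using hopf_pairing_mset_pairing[OF assms] pairs_generators_mset_pairing hopf_pairing_unique by blast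
next
  fix P Q p p' w fl
  assume inv: "inverse_matrices P Q"
    and "hopf_pairing C p \<and> pairs_generators C p \<and>
      hopf_pairing (change_consts P Q C) p' \<and> pairs_generators (change_consts P Q C) p'"
  then have "p = mset_pairing C" and "p' = mset_pairing (change_consts P Q C)"
    using hopf_pairing_unique by blast+
  then show "p' w (mset fl) = transported P Q p w fl"
    by (simp add: transported_eq_expand list_pairing_change_consts[OF inv])
qed

end
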